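(* (i) Let $\mathcal A$ be a finite set of matrices in $GL_2(\mathbb R)$ and let $\Phi$ be the IFS induced by $\mathcal A$ on $\mathbb{RP}^1$. If $\Phi$ satisfies the strong exponential separation condition on a nonempty set, then $\mathcal A$ is strongly Diophantine. (ii) Let $\mathcal A$ be a finite set of matrices in $SL_2(\mathbb R)$ and let $\Phi$ be the IFS induced by $\mathcal A$ on $\mathbb{RP}^1$. Then $\Phi$ satisfies the strong exponential separation condition on some set containing at least three points if and only if $\mathcal A$ is strongly Diophantine.
   Context: $\mathbb{RP}^1$ is identified with $\mathbb R/\pi\mathbb Z$ with its induced metric $d_{\mathbb P}$; $\varphi_A$ is the induced action of $A$. Write $\mathcal A=\{A_i\}_{i\in\Lambda}$, $A_{\mathbf i}=A_{i_1}\cdots A_{i_n}$, $\varphi_{\mathbf i}=\varphi_{A_{i_1}}\circ\cdots\circ\varphi_{A_{i_n}}$. $\Phi$ satisfies the strong exponential separation condition on $J$ if $\varphi_{\mathbf i}\equiv\varphi_{\mathbf j}$ only when $\mathbf i=\mathbf j$, and there is $c>0$ such that for all $n$ and $\mathbf i,\mathbf j\in\Lambda^n$ with $i_1\ne j_1$, $\sup_{x\in J}d_{\mathbb P}(\varphi_{\mathbf i}(x),\varphi_{\mathbf j}(x))>c^n$. $\mathcal A$ is strongly Diophantine if there is $c>0$ such that $\|A_{\mathbf i}-A_{\mathbf j}\|>c^n$ (operator norm) for all $n$ and $\mathbf i\ne\mathbf j\in\Lambda^n$. *)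

theory Defs
  imports "HOL-Analysis.Analysis"
begin

text \<open>RP^1 is identified with R / pi Z; points are represented by reals,
  canonically by representatives in [0, pi).\<close>

definition modpi :: "real \<Rightarrow> real" where
  "modpi t = t - pi * of_int \<lfloor>t / pi\<rfloor>"

definition dP :: "real \<Rightarrow> real \<Rightarrow> real" where
  "dP x y = min (modpi (x - y)) (pi - modpi (x - y))"

definition dirvec :: "real \<Rightarrow> real ^ 2" where
  "dirvec x = (\<chi> i. if i = 1 then cos x else sin x)"

definition phiA :: "real ^ 2 ^ 2 \<Rightarrow> real \<Rightarrow> real" where
  "phiA A x = (let v = A *v dirvec x in modpi (Arg (Complex (v $ 1) (v $ 2))))"

definition words :: "'a set \<Rightarrow> nat \<Rightarrow> 'a list set" where
  "words L n = {w. length w = n \<and> set w \<subseteq> L}"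

definition matw :: "(real ^ 2 ^ 2) list \<Rightarrow> real ^ 2 ^ 2" where
  "matw w = foldr (\<lambda>A B. A ** B) w (mat 1)"

definition phiw :: "(real ^ 2 ^ 2) list \<Rightarrow> real \<Rightarrow> real" where
  "phiw w = foldr (\<lambda>A f. phiA A \<circ> f) w id"

definition strong_exp_sep :: "(real ^ 2 ^ 2) set \<Rightarrow> real set \<Rightarrow> bool" where
  "strong_exp_sep \<A> J \<longleftrightarrow>
     (\<forall>n. \<forall>i\<in>words \<A> n. \<forall>j\<in>words \<A> n. phiw i = phiw j \<longrightarrow> i = j) \<and>
     (\<exists>c>0. \<forall>n. \<forall>i\<in>words \<A> n. \<forall>j\<in>words \<A> n. n \<ge> 1 \<longrightarrow> hd i \<noteq> hd j \<longrightarrow>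
        (SUP x\<in>J. dP (phiw i x) (phiw j x)) > c ^ n)"

definition strongly_diophantine :: "(real ^ 2 ^ 2) set \<Rightarrow> bool" where
  "strongly_diophantine \<A> \<longleftrightarrow>
     (\<exists>c>0. \<forall>n. \<forall>i\<in>words \<A> n. \<forall>j\<in>words \<A> n. i \<noteq> j \<longrightarrow>
        onorm (\<lambda>v. (matw i - matw j) *v v) > c ^ n)"

end

theory Submission
  imports Defs
begin

(* For a unit vector v of direction x and products A_i, A_j of invertible letters, the
   projective distance d of phi_i x and phi_j x satisfies
   sin d * |A_i v| * |A_j v| = |cross2 (A_i v) (A_j v)|.

   (i) Write distinct words of equal length as i = u i', j = u j' with different first
   letters. Separation gives an x in J at which d is exponentially large for i', j', and since
   |cross2 p q| = |cross2 (p - q) q| <= |p - q| |q|, the identity yields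
   |(A_i' - A_j') v| >= sin d * |A_i' v|. Finitely many invertible letters shrink vectors by
   at most a fixed factor, which controls |A_i' v| and the effect of the common prefix A_u.

   (ii) For matrices of determinant one, the Diophantine bound for the words i j and j i
   together with A_i A_j - A_j A_i = A_i (A_i + A_j) - (A_i + A_j) A_i shows that A_i - A_j
   and A_i + A_j are both exponentially large, i.e. M = A_j^-1 A_i is exponentially far from
   +I and -I. A determinant-one matrix that almost fixes the three lines of angle 0, pi/4 and
   pi/2 is close to +I or -I, so at one of these angles the images of the line under A_i and
   A_j are separated by an exponentially large angle. *)

section \<open>Directions, cross products and words\<close>

definition cross2 :: "real^2 \<Rightarrow> real^2 \<Rightarrow> real" where
  "cross2 p q = p$1 * q$2 - p$2 * q$1"

lemma norm_cart2_squared: "norm (x :: real^2) ^ 2 = x$1 ^ 2 + x$2 ^ 2"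
  unfolding power2_norm_eq_inner by (simp add: inner_vec_def sum_2 power2_eq_square)

lemma abs_cross2_le: "\<bar>cross2 p q\<bar> \<le> norm p * norm q"
proof -
  have "(norm p * norm q) ^ 2 = cross2 p q ^ 2 + (p$1 * q$1 + p$2 * q$2) ^ 2"
    unfolding power_mult_distrib norm_cart2_squared cross2_def
    by (simp add: algebra_simps power2_eq_square)
  then have "\<bar>cross2 p q\<bar> ^ 2 \<le> (norm p * norm q) ^ 2"
    by simp
  then show ?thesis
    by (rule power2_le_imp_le) simp
qed

lemma cross2_scaleR: "cross2 (a *\<^sub>R p) (b *\<^sub>R q) = a * b * cross2 p q"
  by (simp add: cross2_def algebra_simps)

lemma cross2_commute: "cross2 q p = - cross2 p q"
  by (simp add: cross2_def)

lemma cross2_diff_left: "cross2 (p - q) q = cross2 p q"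
  by (simp add: cross2_def algebra_simps)

lemma matrix_vector_mult_2: "((B :: real^2^2) *v v)$k = B$k$1 * v$1 + B$k$2 * v$2"
  by (simp add: matrix_vector_mult_def sum_2)

lemma cross2_matrix_vector_mult: "cross2 (B *v p) (B *v q) = det B * cross2 p q"
  by (simp add: cross2_def matrix_vector_mult_2 det_2 algebra_simps)

lemma sin_diff_eq_cross2_dirvec: "sin (a - b) = cross2 (dirvec b) (dirvec a)"
  by (simp add: cross2_def dirvec_def sin_diff algebra_simps)

lemma norm_dirvec [simp]: "norm (dirvec t) = 1"
proof -
  have "norm (dirvec t) ^ 2 = 1"
    by (simp add: norm_cart2_squared dirvec_def)
  then show ?thesis
    using norm_ge_zero[of "dirvec t"] by (simp add: power2_eq_1_iff)
qed

lemma dirvec_nonzero: "dirvec t \<noteq> 0"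
  using norm_dirvec[of t] by (auto simp del: norm_dirvec)

lemma modpi_eq: "\<exists>k::int. modpi t = t - pi * of_int k"
  by (auto simp: modpi_def)

lemma modpi_bounds: "0 \<le> modpi t" "modpi t < pi"
proof -
  have "of_int \<lfloor>t / pi\<rfloor> \<le> t / pi" "t / pi < of_int \<lfloor>t / pi\<rfloor> + 1"
    by linarith+
  then have "pi * of_int \<lfloor>t / pi\<rfloor> \<le> t" "t < pi * (of_int \<lfloor>t / pi\<rfloor> + 1)"
    using pi_gt_zero by (metis mult.commute pos_le_divide_eq, metis mult.commute pos_divide_less_eq)
  then show "0 \<le> modpi t" "modpi t < pi"
    unfolding modpi_def by (auto simp: algebra_simps)
qed

lemma cos_pi_int_squared: "cos (pi * of_int k) ^ 2 = 1"
  using sin_cos_squared_add[of "pi * of_int k"] by simp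

lemma dirvec_modpi: "\<exists>s. s \<noteq> 0 \<and> dirvec (modpi t) = s *\<^sub>R dirvec t"
proof -
  obtain k where k: "modpi t = t - pi * of_int k"
    using modpi_eq by blast
  have "cos (pi * of_int k) \<noteq> 0"
    using cos_pi_int_squared[of k] by auto
  then show ?thesis
    by (intro exI[of _ "cos (pi * of_int k)"])
      (simp add: k dirvec_def cos_diff sin_diff vec_eq_iff forall_2)
qed

lemma dirvec_Arg:
  assumes "w \<noteq> 0"
  shows "\<exists>s. s \<noteq> 0 \<and> dirvec (Arg (Complex (w$1) (w$2))) = s *\<^sub>R w"
proof -
  define z where "z = Complex (w$1) (w$2)"
  have "z \<noteq> 0"
    using assms by (auto simp: z_def vec_eq_iff forall_2 complex_eq_iff)
  have "rcis (cmod z) (Arg z) = z"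
    by (rule rcis_cmod_Arg)
  then have w: "w$1 = cmod z * cos (Arg z)" "w$2 = cmod z * sin (Arg z)"
    by (metis Re_rcis complex.sel(1) z_def, metis Im_rcis complex.sel(2) z_def)
  show ?thesis
    unfolding z_def[symmetric] using \<open>z \<noteq> 0\<close>
    by (intro exI[of _ "1 / cmod z"]) (simp add: dirvec_def vec_eq_iff forall_2 w)
qed

lemma dirvec_phiA:
  assumes "A *v dirvec y \<noteq> 0"
  shows "\<exists>s. s \<noteq> 0 \<and> dirvec (phiA A y) = s *\<^sub>R (A *v dirvec y)"
proof -
  let ?v = "A *v dirvec y"
  obtain s where s: "s \<noteq> 0" "dirvec (Arg (Complex (?v$1) (?v$2))) = s *\<^sub>R ?v"
    using dirvec_Arg[OF assms] by blast
  obtain t where t: "t \<noteq> 0" "dirvec (phiA A y) = t *\<^sub>R dirvec (Arg (Complex (?v$1) (?v$2)))"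
    unfolding phiA_def Let_def using dirvec_modpi by blast
  show ?thesis
    using s t by (intro exI[of _ "t * s"]) simp
qed

lemma matw_Nil [simp]: "matw [] = mat 1"
  and matw_Cons [simp]: "matw (A # w) = A ** matw w"
  by (simp_all add: matw_def)

lemma phiw_Nil [simp]: "phiw [] = id"
  and phiw_Cons [simp]: "phiw (A # w) = phiA A \<circ> phiw w"
  by (simp_all add: phiw_def)

lemma matw_append: "matw (u @ w) = matw u ** matw w"
  by (induction u) (simp_all add: matrix_mul_assoc matrix_mul_lid)

lemma invertible_matw: "\<forall>A\<in>set w. invertible A \<Longrightarrow> invertible (matw w)"
  by (induction w) (auto simp: invertible_det_nz det_mul det_I)

lemma det_matw_eq_1: "\<forall>A\<in>set w. det A = 1 \<Longrightarrow> det (matw w) = 1"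
  by (induction w) (simp_all add: det_mul det_I)

lemma invertible_matrix_vector_mult_nonzero:
  fixes A :: "real^'n^'m"
  assumes "invertible A" "v \<noteq> 0"
  shows "A *v v \<noteq> 0"
  using inj_matrix_vector_mult[OF assms(1)] assms(2)
  by (metis injD matrix_vector_mult_0_right)

lemma dirvec_phiw:
  assumes "\<forall>A\<in>set w. invertible A"
  shows "\<exists>s. s \<noteq> 0 \<and> dirvec (phiw w x) = s *\<^sub>R (matw w *v dirvec x)"
  using assms
proof (induction w)
  case Nil
  then show ?case
    by (intro exI[of _ 1]) (simp add: matrix_vector_mul_lid)
next
  case (Cons A w)
  then obtain s where s: "s \<noteq> 0" "dirvec (phiw w x) = s *\<^sub>R (matw w *v dirvec x)"
    by auto
  have "A *v dirvec (phiw w x) \<noteq> 0"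
    using Cons.prems by (simp add: invertible_matrix_vector_mult_nonzero dirvec_nonzero)
  then obtain t where t: "t \<noteq> 0" "dirvec (phiA A (phiw w x)) = t *\<^sub>R (A *v dirvec (phiw w x))"
    using dirvec_phiA by blast
  show ?case
    using s t by (intro exI[of _ "t * s"])
      (simp add: matrix_vector_mul_assoc[symmetric] matrix_vector_mult_scaleR)
qed

lemma sin_dP: "sin (dP a b) = \<bar>sin (a - b)\<bar>"
  and dP_nonneg: "0 \<le> dP a b"
  and dP_le_pi_half: "dP a b \<le> pi / 2"
proof -
  define m where "m = modpi (a - b)"
  obtain k where k: "m = a - b - pi * of_int k"
    using modpi_eq m_def by blast
  have m: "0 \<le> m" "m < pi"
    using modpi_bounds m_def by auto
  have "sin m = sin (a - b) * cos (pi * of_int k)"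
    by (simp add: k sin_diff)
  then have "\<bar>sin m\<bar> = \<bar>sin (a - b)\<bar>"
    using cos_pi_int_squared[of k] by (simp add: abs_mult power2_eq_1_iff)
  moreover have "sin m \<ge> 0"
    using m sin_ge_zero by auto
  moreover have "dP a b = min m (pi - m)"
    by (simp add: dP_def m_def)
  ultimately show "sin (dP a b) = \<bar>sin (a - b)\<bar>" "0 \<le> dP a b" "dP a b \<le> pi / 2"
    using m by (auto simp: min_def)
qed

lemma dP_self [simp]: "dP a a = 0"
  by (simp add: dP_def modpi_def)

lemma sin_ge_third:
  fixes y :: real
  assumes "0 \<le> y" "y \<le> 2"
  shows "y / 3 \<le> sin y"
proof -
  have "\<bar>sin y - (\<Sum>m<3. sin_coeff m * y ^ m)\<bar> \<le> inverse (fact 3) * \<bar>y\<bar> ^ 3"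
    by (rule Maclaurin_sin_bound)
  then have "\<bar>sin y - y\<bar> \<le> y ^ 3 / 6"
    using assms by (simp add: sin_coeff_def numeral_3_eq_3 lessThan_Suc fact_numeral)
  moreover have "y ^ 3 \<le> 4 * y"
    using assms mult_left_mono[of "y * y" 4 y] mult_mono[of y 2 y 2]
    by (simp add: power3_eq_cube mult.commute)
  ultimately show ?thesis
    by linarith
qed

lemma dP_le_3_sin_dP: "dP a b \<le> 3 * sin (dP a b)"
  using sin_ge_third[of "dP a b"] dP_nonneg[of a b] dP_le_pi_half[of a b] pi_less_4 by linarith

lemma sin_dP_phiw:
  assumes "\<forall>A\<in>set i. invertible A" "\<forall>A\<in>set j. invertible A"
  shows "sin (dP (phiw i x) (phiw j x)) * (norm (matw i *v dirvec x) * norm (matw j *v dirvec x))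
         = \<bar>cross2 (matw i *v dirvec x) (matw j *v dirvec x)\<bar>"
proof -
  define p where "p = matw i *v dirvec x"
  define q where "q = matw j *v dirvec x"
  obtain s where s: "s \<noteq> 0" "dirvec (phiw i x) = s *\<^sub>R p"
    using dirvec_phiw[OF assms(1)] p_def by blast
  obtain t where t: "t \<noteq> 0" "dirvec (phiw j x) = t *\<^sub>R q"
    using dirvec_phiw[OF assms(2)] q_def by blast
  have "\<bar>s\<bar> * norm p = 1" "\<bar>t\<bar> * norm q = 1"
    using norm_dirvec[of "phiw i x"] norm_dirvec[of "phiw j x"] s t by simp_all
  moreover have "sin (dP (phiw i x) (phiw j x)) = \<bar>s\<bar> * \<bar>t\<bar> * \<bar>cross2 p q\<bar>"
    by (simp add: sin_dP sin_diff_eq_cross2_dirvec s t cross2_scaleR abs_mult cross2_commute[of q])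
  then have "sin (dP (phiw i x) (phiw j x)) * (norm p * norm q)
      = (\<bar>s\<bar> * norm p) * (\<bar>t\<bar> * norm q) * \<bar>cross2 p q\<bar>"
    by (simp only: mult_ac)
  ultimately show ?thesis
    unfolding p_def[symmetric] q_def[symmetric] by simp
qed

section \<open>Operator norms of matrices\<close>

definition matrix_norm :: "real^'n^'m \<Rightarrow> real" where
  "matrix_norm B = onorm (\<lambda>v. B *v v)"

lemma norm_matrix_vector_mult_le: "norm (B *v v) \<le> matrix_norm B * norm v"
  unfolding matrix_norm_def by (rule onorm) simp

lemma matrix_norm_nonneg: "0 \<le> matrix_norm B"
  unfolding matrix_norm_def by (rule onorm_pos_le) simp

lemma matrix_norm_mult_le: "matrix_norm (A ** B) \<le> matrix_norm A * matrix_norm B"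
proof -
  have "(\<lambda>v. (A ** B) *v v) = (\<lambda>v. A *v v) \<circ> (\<lambda>v. B *v v)"
    by (auto simp: matrix_vector_mul_assoc)
  then show ?thesis
    unfolding matrix_norm_def by (simp add: onorm_compose)
qed

lemma matrix_norm_mat1_le: "matrix_norm (mat 1 :: real^'n^'n) \<le> 1"
  unfolding matrix_norm_def matrix_vector_mul_lid by (rule onorm_id_le)

lemma matrix_norm_diff_le: "matrix_norm (A - B) \<le> matrix_norm A + matrix_norm B"
proof -
  have "(\<lambda>v. (A - B) *v v) = (\<lambda>v. A *v v + - (B *v v))"
    by (simp add: matrix_vector_mult_diff_rdistrib)
  then show ?thesis
    unfolding matrix_norm_def using onorm_triangle[of "\<lambda>v. A *v v" "\<lambda>v. - (B *v v)"]
    by (simp add: onorm_neg bounded_linear_minus)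
qed

lemma abs_matrix_entry_le: "\<bar>B$k$l\<bar> \<le> matrix_norm B"
proof -
  have "\<bar>B$k$l\<bar> \<le> norm (B *v axis l 1)"
    by (metis component_le_norm_cart matrix_vector_mult_basis column_def vec_lambda_beta)
  also have "\<dots> \<le> matrix_norm B"
    using norm_matrix_vector_mult_le[of B "axis l 1"] by simp
  finally show ?thesis .
qed

lemma matrix_norm_matw_le:
  assumes "\<forall>A\<in>set w. matrix_norm A \<le> K" "0 \<le> K"
  shows "matrix_norm (matw w) \<le> K ^ length w"
  using assms(1)
proof (induction w)
  case Nil
  then show ?case
    using matrix_norm_mat1_le by simp
next
  case (Cons A w)
  have "matrix_norm (matw (A # w)) \<le> matrix_norm A * matrix_norm (matw w)"
    by (simp add: matrix_norm_mult_le)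
  also have "\<dots> \<le> K * K ^ length w"
    using Cons assms(2) matrix_norm_nonneg by (intro mult_mono) auto
  finally show ?case
    by simp
qed

lemma norm_matw_mult_ge:
  assumes "\<forall>A\<in>set w. \<forall>y. r * norm y \<le> norm (A *v y)" "0 \<le> r"
  shows "r ^ length w * norm y \<le> norm (matw w *v y)"
  using assms(1)
proof (induction w arbitrary: y)
  case Nil
  then show ?case
    by (simp add: matrix_vector_mul_lid)
next
  case (Cons A w)
  have "r ^ length (A # w) * norm y \<le> r * norm (matw w *v y)"
    using Cons assms(2) by (simp add: mult.assoc mult_left_mono)
  also have "\<dots> \<le> norm (matw (A # w) *v y)"
    using Cons.prems by (simp add: matrix_vector_mul_assoc[symmetric])
  finally show ?case .
qed

lemma finite_invertible_bounded_below:
  fixes \<A> :: "(real^'n^'n) set"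
  assumes "finite \<A>" "\<forall>A\<in>\<A>. invertible A"
  obtains r where "r > 0" "\<forall>A\<in>\<A>. \<forall>y. r * norm y \<le> norm (A *v y)"
  using assms
proof (induction \<A> arbitrary: thesis rule: finite_induct)
  case empty
  then show ?case
    using zero_less_one by blast
next
  case (insert A \<A>)
  obtain r where r: "r > 0" "\<forall>B\<in>\<A>. \<forall>y. r * norm y \<le> norm (B *v y)"
    using insert by blast
  obtain s where s: "s > 0" "\<And>y. s * norm y \<le> norm (A *v y)"
    using linear_inj_bounded_below_pos[OF matrix_vector_mul_linear inj_matrix_vector_mult] insert.prems
    by blast
  have "min r s * norm y \<le> r * norm y" "min r s * norm y \<le> s * norm y" for y
    by (simp_all add: mult_right_mono)
  then show ?case
    using r s by (intro insert.prems(1)[of "min r s"])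
      (auto intro: order_trans[OF _ s(2)] order_trans[OF _ r(2)[rule_format]])
qed

section \<open>Separation implies the strong Diophantine property\<close>

lemma words_first_difference:
  assumes "length i = length j" "i \<noteq> j"
  obtains u i' j' where "i = u @ i'" "j = u @ j'" "i' \<noteq> []" "j' \<noteq> []" "hd i' \<noteq> hd j'"
proof -
  obtain u i' j' where "i = u @ i'" "j = u @ j'" "i' = [] \<or> j' = [] \<or> hd i' \<noteq> hd j'"
    using longest_common_prefix by blast
  moreover have "length i' = length j'" "i' \<noteq> j'"
    using assms calculation(1,2) by auto
  then have "i' \<noteq> []" "j' \<noteq> []"
    by auto
  ultimately show thesis
    using that by blast
qed

lemma sin_dP_mult_le_norm_diff:
  assumes "\<forall>A\<in>set i. invertible A" "\<forall>A\<in>set j. invertible A"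
  shows "sin (dP (phiw i x) (phiw j x)) * norm (matw i *v dirvec x)
         \<le> norm ((matw i - matw j) *v dirvec x)"
proof -
  define p where "p = matw i *v dirvec x"
  define q where "q = matw j *v dirvec x"
  have "q \<noteq> 0"
    unfolding q_def using assms(2)
    by (simp add: invertible_matw invertible_matrix_vector_mult_nonzero dirvec_nonzero)
  have "sin (dP (phiw i x) (phiw j x)) * norm p * norm q = \<bar>cross2 (p - q) q\<bar>"
    using sin_dP_phiw[OF assms, of x] by (simp add: p_def q_def cross2_diff_left mult.assoc)
  also have "\<dots> \<le> norm (p - q) * norm q"
    by (rule abs_cross2_le)
  finally have "sin (dP (phiw i x) (phiw j x)) * norm p \<le> norm (p - q)"
    using \<open>q \<noteq> 0\<close> by simp
  then show ?thesis
    by (simp add: p_def q_def matrix_vector_mult_diff_rdistrib)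
qed

lemma dP_phiw_le_norm_diff:
  assumes "\<forall>A\<in>set i. invertible A" "\<forall>A\<in>set j. invertible A"
    and "\<forall>A\<in>set i. \<forall>y. r * norm y \<le> norm (A *v y)" "0 \<le> r"
  shows "r ^ length i * dP (phiw i x) (phiw j x) \<le> 3 * norm ((matw i - matw j) *v dirvec x)"
proof -
  let ?d = "dP (phiw i x) (phiw j x)"
  have "r ^ length i * ?d \<le> norm (matw i *v dirvec x) * (3 * sin ?d)"
    using norm_matw_mult_ge[OF assms(3,4), of "dirvec x"] dP_le_3_sin_dP[of "phiw i x" "phiw j x"]
    by (intro mult_mono) (auto simp: dP_nonneg)
  also have "\<dots> \<le> 3 * norm ((matw i - matw j) *v dirvec x)"
    using sin_dP_mult_le_norm_diff[OF assms(1,2), of x] by (simp add: mult_ac)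
  finally show ?thesis .
qed

lemma norm_matw_append_diff_ge:
  assumes "\<forall>A\<in>set u. \<forall>y. r * norm y \<le> norm (A *v y)" "0 \<le> r"
  shows "r ^ length u * norm ((matw i - matw j) *v v) \<le> norm ((matw (u @ i) - matw (u @ j)) *v v)"
proof -
  have "(matw (u @ i) - matw (u @ j)) *v v = matw u *v ((matw i - matw j) *v v)"
    by (simp add: matw_append matrix_vector_mul_assoc matrix_vector_mult_diff_rdistrib
        matrix_vector_mult_diff_distrib)
  then show ?thesis
    using norm_matw_mult_ge[OF assms] by simp
qed

lemma power_split_le:
  fixes a c r :: real
  assumes "0 < a" "a \<le> 1" "a \<le> c" "0 \<le> r" "1 \<le> m"
  shows "(a * r / 3) ^ (l + m) \<le> r ^ l * (r ^ m * c ^ m / 3)"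
proof -
  have "a ^ (l + m) \<le> a ^ m"
    using assms by (intro power_decreasing) auto
  also have "\<dots> \<le> c ^ m"
    using assms by (intro power_mono) auto
  finally have "a ^ (l + m) \<le> c ^ m" .
  moreover have "3 \<le> (3::real) ^ (l + m)"
    using power_increasing[of 1 "l + m" "3::real"] assms(5) by simp
  ultimately have "a ^ (l + m) / 3 ^ (l + m) \<le> c ^ m / 3"
    using assms(1,3) by (intro frac_le) auto
  then have "a ^ (l + m) / 3 ^ (l + m) * r ^ (l + m) \<le> c ^ m / 3 * r ^ (l + m)"
    using assms(4) by (intro mult_right_mono) auto
  then show ?thesis
    by (simp add: power_mult_distrib power_divide power_add mult_ac)
qed

lemma strong_exp_sep_imp_strongly_diophantine:
  assumes "finite \<A>" "\<forall>A\<in>\<A>. invertible A" "J \<noteq> {}" "strong_exp_sep \<A> J"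
  shows "strongly_diophantine \<A>"
proof -
  obtain c where "c > 0" and sep: "\<And>n i j. i \<in> words \<A> n \<Longrightarrow> j \<in> words \<A> n \<Longrightarrow> n \<ge> 1 \<Longrightarrow>
      hd i \<noteq> hd j \<Longrightarrow> c ^ n < (SUP x\<in>J. dP (phiw i x) (phiw j x))"
    using assms(4) unfolding strong_exp_sep_def by blast
  obtain r where "r > 0" and r: "\<forall>A\<in>\<A>. \<forall>y. r * norm y \<le> norm (A *v y)"
    using finite_invertible_bounded_below assms(1,2) by blast
  define c' where "c' = min c 1"
  have c': "0 < c'" "c' \<le> 1" "c' \<le> c"
    using \<open>c > 0\<close> by (auto simp: c'_def)
  show ?thesis
    unfolding strongly_diophantine_def
  proof (intro exI[of _ "c' * r / 3"] conjI allI ballI impI)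
    show "0 < c' * r / 3"
      using c' \<open>r > 0\<close> by simp
    fix n i j
    assume "i \<in> words \<A> n" "j \<in> words \<A> n" "i \<noteq> j"
    then have "length i = n" "length j = n" "set i \<subseteq> \<A>" "set j \<subseteq> \<A>"
      by (auto simp: words_def)
    obtain u i' j' where ij: "i = u @ i'" "j = u @ j'" "i' \<noteq> []" "j' \<noteq> []" "hd i' \<noteq> hd j'"
      using words_first_difference \<open>length i = n\<close> \<open>length j = n\<close> \<open>i \<noteq> j\<close> by metis
    define m where "m = length i'"
    have "m \<ge> 1" "n = length u + m" "i' \<in> words \<A> m" "j' \<in> words \<A> m"
      using ij \<open>length i = n\<close> \<open>length j = n\<close> \<open>set i \<subseteq> \<A>\<close> \<open>set j \<subseteq> \<A>\<close>
      by (auto simp: m_def Suc_le_eq words_def)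
    then have "c ^ m < (SUP x\<in>J. dP (phiw i' x) (phiw j' x))"
      using sep ij(5) by blast
    moreover have "bdd_above ((\<lambda>x. dP (phiw i' x) (phiw j' x)) ` J)"
      using dP_le_pi_half by (intro bdd_aboveI2)
    ultimately obtain x where "c ^ m < dP (phiw i' x) (phiw j' x)"
      using less_cSUP_iff[OF assms(3)] by blast
    then have "r ^ m * c ^ m < r ^ m * dP (phiw i' x) (phiw j' x)"
      using \<open>r > 0\<close> by simp
    also have "\<dots> \<le> 3 * norm ((matw i' - matw j') *v dirvec x)"
      using \<open>i' \<in> words \<A> m\<close> \<open>j' \<in> words \<A> m\<close> assms(2) r \<open>r > 0\<close>
      by (intro dP_phiw_le_norm_diff[where r = r, of i' j' x, unfolded m_def[symmetric]])
        (auto simp: words_def)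
    finally have tail: "r ^ m * c ^ m < 3 * norm ((matw i' - matw j') *v dirvec x)" .
    have "(c' * r / 3) ^ n \<le> r ^ length u * (r ^ m * c ^ m / 3)"
      unfolding \<open>n = length u + m\<close> using c' \<open>r > 0\<close> \<open>m \<ge> 1\<close> by (intro power_split_le) auto
    also have "\<dots> < r ^ length u * norm ((matw i' - matw j') *v dirvec x)"
      using tail \<open>r > 0\<close> by simp
    also have "\<dots> \<le> norm ((matw i - matw j) *v dirvec x)"
      unfolding ij using r \<open>set i \<subseteq> \<A>\<close> ij(1) \<open>r > 0\<close> by (intro norm_matw_append_diff_ge) auto
    also have "\<dots> \<le> onorm (\<lambda>v. (matw i - matw j) *v v)"
      using norm_matrix_vector_mult_le[of "matw i - matw j" "dirvec x"] by (simp add: matrix_norm_def)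
    finally show "(c' * r / 3) ^ n < onorm (\<lambda>v. (matw i - matw j) *v v)" .
  qed
qed

section \<open>The strong Diophantine property implies separation in SL(2)\<close>

lemma matrix_matrix_mult_2: "((A :: real^2^2) ** B)$i$j = A$i$1 * B$1$j + A$i$2 * B$2$j"
  by (simp add: matrix_matrix_mult_def sum_2)

definition entry_sum :: "real^2^2 \<Rightarrow> real" where
  "entry_sum B = \<bar>B$1$1\<bar> + \<bar>B$1$2\<bar> + \<bar>B$2$1\<bar> + \<bar>B$2$2\<bar>"

lemma entry_sum_le_4_matrix_norm: "entry_sum B \<le> 4 * matrix_norm B"
  using abs_matrix_entry_le[of B 1 1] abs_matrix_entry_le[of B 1 2]
    abs_matrix_entry_le[of B 2 1] abs_matrix_entry_le[of B 2 2]
  by (simp add: entry_sum_def)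

lemma matrix_norm_le_entry_sum: "matrix_norm B \<le> entry_sum B"
  unfolding matrix_norm_def
proof (rule onorm_le)
  fix v :: "real^2"
  have row: "\<bar>(B *v v)$k\<bar> \<le> (\<bar>B$k$1\<bar> + \<bar>B$k$2\<bar>) * norm v" for k
  proof -
    have "\<bar>(B *v v)$k\<bar> \<le> \<bar>B$k$1\<bar> * \<bar>v$1\<bar> + \<bar>B$k$2\<bar> * \<bar>v$2\<bar>"
      unfolding matrix_vector_mult_2 by (metis abs_mult abs_triangle_ineq)
    also have "\<dots> \<le> \<bar>B$k$1\<bar> * norm v + \<bar>B$k$2\<bar> * norm v"
      using component_le_norm_cart[of v] by (intro add_mono mult_left_mono) auto
    finally show ?thesis
      by (simp add: algebra_simps)
  qed
  have "norm (B *v v) \<le> \<bar>(B *v v)$1\<bar> + \<bar>(B *v v)$2\<bar>"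
    using norm_le_l1_cart[of "B *v v"] by (simp add: sum_2)
  also have "\<dots> \<le> entry_sum B * norm v"
    using row[of 1] row[of 2] by (simp add: entry_sum_def algebra_simps)
  finally show "norm (B *v v) \<le> entry_sum B * norm v" .
qed

definition adjugate2 :: "real^2^2 \<Rightarrow> real^2^2" where
  "adjugate2 B = (\<chi> i j. if i = 1 then (if j = 1 then B$2$2 else - B$1$2)
                                  else (if j = 1 then - B$2$1 else B$1$1))"

lemma mult_adjugate2: "det B = 1 \<Longrightarrow> B ** adjugate2 B = mat 1"
  by (simp add: vec_eq_iff forall_2 matrix_matrix_mult_2 adjugate2_def mat_def det_2 algebra_simps)

lemma det_adjugate2: "det (adjugate2 B) = det B"
  by (simp add: adjugate2_def det_2 algebra_simps)

lemma entry_sum_adjugate2: "entry_sum (adjugate2 B) = entry_sum B"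
  by (simp add: adjugate2_def entry_sum_def)

lemma matrix_norm_commutator_le:
  fixes X Y :: "real^2^2"
  shows "matrix_norm (X ** Y - Y ** X) \<le> 2 * matrix_norm X * matrix_norm (X + Y)"
proof -
  have "X ** Y - Y ** X = X ** (X + Y) - (X + Y) ** X"
    by (simp add: vec_eq_iff forall_2 matrix_matrix_mult_2 algebra_simps)
  then have "matrix_norm (X ** Y - Y ** X)
      \<le> matrix_norm (X ** (X + Y)) + matrix_norm ((X + Y) ** X)"
    by (simp add: matrix_norm_diff_le)
  also have "\<dots> \<le> matrix_norm X * matrix_norm (X + Y) + matrix_norm (X + Y) * matrix_norm X"
    by (intro add_mono matrix_norm_mult_le)
  finally show ?thesis
    by simp
qed

lemma sl2_entries_far_from_pm_id:
  fixes a b c d e h A0 :: real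
  assumes det: "a * d - b * c = 1" and b: "\<bar>b\<bar> \<le> e" and c: "\<bar>c\<bar> \<le> e"
    and diag: "\<bar>a + b - c - d\<bar> \<le> 2 * e"
    and a: "\<bar>a\<bar> \<le> A0" "1 \<le> A0" and h: "0 < h" "h \<le> 1"
    and far_id: "h < \<bar>a - 1\<bar> + \<bar>b\<bar> + \<bar>c\<bar> + \<bar>d - 1\<bar>"
    and far_minus_id: "h < \<bar>a + 1\<bar> + \<bar>b\<bar> + \<bar>c\<bar> + \<bar>d + 1\<bar>"
  shows "h ^ 2 / (80 * A0) \<le> e"
proof (rule ccontr)
  assume "\<not> ?thesis"
  then have e_small: "e < h ^ 2 / (80 * A0)"
    by simp
  have "h ^ 2 / (80 * A0) \<le> h / 80"
    using a h by (simp add: field_simps power2_eq_square mult_mono)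
  then have "e < h / 80" "0 \<le> e"
    using e_small b by linarith+
  have "\<bar>a - d\<bar> \<le> 4 * e"
    using b c diag by linarith
  then have "h / 4 < \<bar>a - 1\<bar>" "h / 4 < \<bar>a + 1\<bar>"
    using far_id far_minus_id b c \<open>e < h / 80\<close> by linarith+
  then have "h / 4 * (h / 4) < \<bar>a - 1\<bar> * \<bar>a + 1\<bar>"
    using h by (intro mult_strict_mono) auto
  then have "h ^ 2 / 16 < \<bar>a * a - 1\<bar>"
    by (simp add: power2_eq_square abs_mult[symmetric] algebra_simps)
  also have "a * a - 1 = a * (a - d) + b * c"
    using det by (simp add: algebra_simps)
  also have "\<bar>\<dots>\<bar> \<le> \<bar>a\<bar> * \<bar>a - d\<bar> + \<bar>b\<bar> * \<bar>c\<bar>"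
    by (simp add: abs_mult[symmetric] abs_triangle_ineq)
  also have "\<dots> \<le> A0 * (4 * e) + e * 1"
    using a \<open>\<bar>a - d\<bar> \<le> 4 * e\<close> b c \<open>e < h / 80\<close> h by (intro add_mono mult_mono) auto
  also have "\<dots> \<le> 5 * A0 * e"
    using a mult_right_mono[of 1 A0 e] \<open>0 \<le> e\<close> by simp
  also have "\<dots> < 5 * A0 * (h ^ 2 / (80 * A0))"
    using e_small a by (intro mult_strict_left_mono) auto
  also have "\<dots> = h ^ 2 / 16"
    using a by (simp add: field_simps)
  finally show False
    by simp
qed

lemma dirvec_test_points:
  "dirvec 0 = (\<chi> i. if i = 1 then 1 else 0)"
  "dirvec (pi / 2) = (\<chi> i. if i = 1 then 0 else 1)"
  "dirvec (pi / 4) = (\<chi> i. sqrt 2 / 2)"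
  by (simp_all add: dirvec_def cos_45 sin_45 vec_eq_iff)

lemma sl2_far_from_pm_id_moves_test_line:
  fixes M :: "real^2^2"
  assumes "det M = 1" "\<bar>M$1$1\<bar> \<le> A0" "1 \<le> A0" "0 < h" "h \<le> 1"
    and "h < entry_sum (M - mat 1)" "h < entry_sum (M + mat 1)"
  shows "\<exists>x\<in>{0, pi/4, pi/2}. h ^ 2 / (80 * A0) \<le> \<bar>cross2 (M *v dirvec x) (dirvec x)\<bar>"
proof -
  define T :: "real set" where "T = {0, pi/4, pi/2}"
  define f where "f x = \<bar>cross2 (M *v dirvec x) (dirvec x)\<bar>" for x
  define e where "e = Max (f ` T)"
  have "f x \<le> e" if "x \<in> T" for x
    unfolding e_def by (intro Max_ge imageI that) (simp add: T_def)
  then have "f 0 \<le> e" "f (pi / 4) \<le> e" "f (pi / 2) \<le> e"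
    by (simp_all add: T_def)
  moreover have "f 0 = \<bar>M$2$1\<bar>" "f (pi / 2) = \<bar>M$1$2\<bar>"
    by (simp_all add: f_def dirvec_test_points cross2_def matrix_vector_mult_2)
  moreover have "f (pi / 4) = \<bar>M$1$1 + M$1$2 - M$2$1 - M$2$2\<bar> / 2"
  proof -
    have "cross2 (M *v (\<chi> i. t)) (\<chi> i. t) = (M$1$1 + M$1$2 - M$2$1 - M$2$2) * (t * t)" for t
      by (simp add: cross2_def matrix_vector_mult_2 algebra_simps)
    moreover have "sqrt 2 / 2 * (sqrt 2 / 2) = (1 / 2 :: real)"
      by (simp add: field_simps)
    ultimately show ?thesis
      by (simp add: f_def dirvec_test_points)
  qed
  ultimately have "h ^ 2 / (80 * A0) \<le> e"
    using assms by (intro sl2_entries_far_from_pm_id[of "M$1$1" "M$2$2" "M$1$2" "M$2$1"])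
      (auto simp: det_2 entry_sum_def mat_def)
  moreover have "e \<in> f ` T"
    unfolding e_def T_def by (intro Max_in) auto
  ultimately show ?thesis
    by (auto simp: T_def f_def)
qed

lemma sl2_pair_separates_test_line:
  fixes B B' :: "real^2^2"
  assumes "det B = 1" "det B' = 1" "matrix_norm B \<le> L" "matrix_norm B' \<le> L" "1 \<le> L"
    and "0 < \<eta>" "\<eta> \<le> 1" "\<eta> < matrix_norm (B - B')" "\<eta> < matrix_norm (B + B')"
  shows "\<exists>x\<in>{0, pi/4, pi/2}. \<eta> ^ 2 / (320 * L ^ 4) \<le> \<bar>cross2 (B *v dirvec x) (B' *v dirvec x)\<bar>"
proof -
  define M where "M = adjugate2 B' ** B"
  have B: "B = B' ** M"
    unfolding M_def using mult_adjugate2[OF assms(2)] by (simp add: matrix_mul_assoc)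
  have "det M = 1"
    using assms(1,2) by (simp add: M_def det_mul det_adjugate2)
  have "\<bar>M$1$1\<bar> \<le> matrix_norm (adjugate2 B') * matrix_norm B"
    using abs_matrix_entry_le[of M 1 1] matrix_norm_mult_le[of "adjugate2 B'" B]
    unfolding M_def by (rule order_trans)
  also have "\<dots> \<le> (4 * L) * L"
    using matrix_norm_le_entry_sum[of "adjugate2 B'"] entry_sum_le_4_matrix_norm[of B']
      assms(3,4) matrix_norm_nonneg[of B]
    by (intro mult_mono) (auto simp: entry_sum_adjugate2)
  finally have M11: "\<bar>M$1$1\<bar> \<le> 4 * L ^ 2"
    by (simp add: power2_eq_square)
  have "matrix_norm (B' ** N) \<le> L * entry_sum N" for N
    using matrix_norm_mult_le[of B' N] matrix_norm_le_entry_sum[of N] matrix_norm_nonneg[of N] assms(4,5)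
    by (meson mult_mono order_trans zero_le_one)
  moreover have "B - B' = B' ** (M - mat 1)" "B + B' = B' ** (M + mat 1)"
    by (simp_all add: B vec_eq_iff forall_2 matrix_matrix_mult_2 mat_def algebra_simps)
  ultimately have "\<eta> < L * entry_sum (M - mat 1)" "\<eta> < L * entry_sum (M + mat 1)"
    using assms(8,9) by (metis order_less_le_trans)+
  then have "\<eta> / L < entry_sum (M - mat 1)" "\<eta> / L < entry_sum (M + mat 1)"
    using assms(5) by (simp_all add: pos_divide_less_eq mult.commute)
  moreover have "0 < \<eta> / L" "\<eta> / L \<le> 1"
    using assms(5,6,7) by (auto simp: field_simps)
  moreover have "1 \<le> 4 * L ^ 2"
    using one_le_power[OF assms(5), of 2] by linarith
  ultimately obtain x where "x \<in> {0, pi/4, pi/2}"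
    "(\<eta> / L) ^ 2 / (80 * (4 * L ^ 2)) \<le> \<bar>cross2 (M *v dirvec x) (dirvec x)\<bar>"
    using sl2_far_from_pm_id_moves_test_line[OF \<open>det M = 1\<close> M11] by blast
  moreover have "cross2 (B *v v) (B' *v v) = cross2 (M *v v) v" for v
    using cross2_matrix_vector_mult[of B' "M *v v" v] assms(2) by (simp add: B matrix_vector_mul_assoc)
  moreover have "(\<eta> / L) ^ 2 / (80 * (4 * L ^ 2)) = \<eta> ^ 2 / (320 * L ^ 4)"
    using assms(5) by (simp add: power_divide field_simps)
  ultimately show ?thesis
    by (intro bexI[of _ x]) simp_all
qed

lemma abs_cross2_le_dP_phiw:
  assumes "\<forall>A\<in>set i. invertible A" "\<forall>A\<in>set j. invertible A"
  shows "\<bar>cross2 (matw i *v dirvec x) (matw j *v dirvec x)\<bar>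
         \<le> matrix_norm (matw i) * matrix_norm (matw j) * dP (phiw i x) (phiw j x)"
proof -
  let ?p = "matw i *v dirvec x" and ?q = "matw j *v dirvec x" and ?d = "dP (phiw i x) (phiw j x)"
  have "\<bar>cross2 ?p ?q\<bar> = sin ?d * (norm ?p * norm ?q)"
    using sin_dP_phiw[OF assms] by simp
  also have "\<dots> \<le> ?d * (matrix_norm (matw i) * matrix_norm (matw j))"
    using norm_matrix_vector_mult_le[of "matw i" "dirvec x"] norm_matrix_vector_mult_le[of "matw j" "dirvec x"]
      sin_x_le_x[OF dP_nonneg] dP_nonneg sin_ge_zero[OF dP_nonneg] dP_le_pi_half[of "phiw i x" "phiw j x"]
      matrix_norm_nonneg[of "matw i"]
    by (intro mult_mono) auto
  finally show ?thesis
    by (simp add: mult_ac)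
qed

lemma sl2_words_separate_test_line:
  assumes "\<forall>A\<in>set i. det A = 1" "\<forall>A\<in>set j. det A = 1"
    and norms: "matrix_norm (matw i) \<le> L" "matrix_norm (matw j) \<le> L" "1 \<le> L"
    and "0 < \<eta>" "\<eta> \<le> 1" "\<eta> < matrix_norm (matw i - matw j)" "\<eta> < matrix_norm (matw i + matw j)"
  shows "\<exists>x\<in>{0, pi/4, pi/2}. \<eta> ^ 2 / (320 * L ^ 6) \<le> dP (phiw i x) (phiw j x)"
proof -
  have inv: "\<forall>A\<in>set i. invertible A" "\<forall>A\<in>set j. invertible A"
    using assms(1,2) by (auto simp: invertible_det_nz)
  obtain x where x: "x \<in> {0, pi/4, pi/2}"
    and lower: "\<eta> ^ 2 / (320 * L ^ 4) \<le> \<bar>cross2 (matw i *v dirvec x) (matw j *v dirvec x)\<bar>"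
    using sl2_pair_separates_test_line[OF det_matw_eq_1 det_matw_eq_1 norms] assms by blast
  note lower
  also have "\<dots> \<le> L ^ 2 * dP (phiw i x) (phiw j x)"
  proof -
    have "matrix_norm (matw i) * matrix_norm (matw j) \<le> L ^ 2"
      using mult_mono[OF norms(1,2) _ matrix_norm_nonneg] norms(3) by (simp add: power2_eq_square)
    then show ?thesis
      using abs_cross2_le_dP_phiw[OF inv, of x] mult_right_mono[OF _ dP_nonneg] by (meson order_trans)
  qed
  finally have "\<eta> ^ 2 / (320 * L ^ 4) / L ^ 2 \<le> dP (phiw i x) (phiw j x)"
    using norms(3) by (simp add: pos_divide_le_eq mult_ac)
  then have "\<eta> ^ 2 / (320 * L ^ 6) \<le> dP (phiw i x) (phiw j x)"
    by (simp add: power_add[of L 4 2, simplified] mult_ac)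
  then show ?thesis
    using x by blast
qed

lemma dP_phiw_lower_bound:
  assumes det: "\<forall>A\<in>\<A>. det A = 1" and K: "\<forall>A\<in>\<A>. matrix_norm A \<le> K" "1 \<le> K"
    and c: "0 < c" "c \<le> 1"
    and dioph: "\<And>n i j. i \<in> words \<A> n \<Longrightarrow> j \<in> words \<A> n \<Longrightarrow> i \<noteq> j \<Longrightarrow>
                  c ^ n < matrix_norm (matw i - matw j)"
    and ij: "i \<in> words \<A> n" "j \<in> words \<A> n" "i \<noteq> j"
  shows "\<exists>x\<in>{0, pi/4, pi/2}. (c ^ 4 / K ^ 8) ^ n / 1280 \<le> dP (phiw i x) (phiw j x)"
proof -
  have words: "length i = n" "length j = n" "set i \<subseteq> \<A>" "set j \<subseteq> \<A>"
    using ij by (auto simp: words_def)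
  define L where "L = K ^ n"
  define C where "C = c ^ n"
  have "1 \<le> L" "0 < C" "C \<le> 1"
    using K c by (simp_all add: L_def C_def one_le_power power_le_one)
  have "\<forall>A\<in>set i. matrix_norm A \<le> K" "\<forall>A\<in>set j. matrix_norm A \<le> K"
    using K(1) words by auto
  then have norms: "matrix_norm (matw i) \<le> L" "matrix_norm (matw j) \<le> L"
    using matrix_norm_matw_le[of i K] matrix_norm_matw_le[of j K] K(2) words by (simp_all add: L_def)
  define \<eta> where "\<eta> = C ^ 2 / (2 * L)"
  have "0 < \<eta>" "\<eta> \<le> C / 2"
    using \<open>1 \<le> L\<close> \<open>0 < C\<close> \<open>C \<le> 1\<close> by (auto simp: \<eta>_def field_simps power2_eq_square mult_mono)
  have far_diff: "\<eta> < matrix_norm (matw i - matw j)"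
    using dioph[OF ij] \<open>\<eta> \<le> C / 2\<close> \<open>0 < C\<close> by (simp add: C_def)
  \<comment> \<open>The words i @ j and j @ i differ, so the commutator of the two products is not small.\<close>
  have far_sum: "\<eta> < matrix_norm (matw i + matw j)"
  proof -
    have "i @ j \<in> words \<A> (2 * n)" "j @ i \<in> words \<A> (2 * n)" "i @ j \<noteq> j @ i"
      using words ij(3) by (auto simp: words_def append_eq_append_conv)
    then have "C ^ 2 < matrix_norm (matw i ** matw j - matw j ** matw i)"
      using dioph[of "i @ j" "2 * n" "j @ i"] by (simp add: C_def matw_append power_mult[symmetric] mult.commute)
    also have "\<dots> \<le> 2 * L * matrix_norm (matw i + matw j)"
      using matrix_norm_commutator_le[of "matw i" "matw j"] norms(1) matrix_norm_nonneg
      by (meson mult_left_mono mult_right_mono order_trans zero_le_numeral)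
    finally show ?thesis
      using \<open>1 \<le> L\<close> by (simp add: \<eta>_def pos_divide_less_eq mult.commute)
  qed
  have "\<eta> \<le> 1"
    using \<open>\<eta> \<le> C / 2\<close> \<open>C \<le> 1\<close> by simp
  then obtain x where x: "x \<in> {0, pi/4, pi/2}" and "\<eta> ^ 2 / (320 * L ^ 6) \<le> dP (phiw i x) (phiw j x)"
    using sl2_words_separate_test_line[OF _ _ norms \<open>1 \<le> L\<close> \<open>0 < \<eta>\<close> _ far_diff far_sum] det words
    by blast
  moreover have "\<eta> ^ 2 / (320 * L ^ 6) = (c ^ 4 / K ^ 8) ^ n / 1280"
  proof -
    have "\<eta> ^ 2 / (320 * L ^ 6) = C ^ 4 / L ^ 8 / 1280"
      using \<open>1 \<le> L\<close> unfolding \<eta>_def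
      by (simp add: power_divide power_mult_distrib field_simps flip: power_add power_mult)
    then show ?thesis
      by (simp add: C_def L_def power_divide mult.commute flip: power_mult)
  qed
  ultimately have "(c ^ 4 / K ^ 8) ^ n / 1280 \<le> dP (phiw i x) (phiw j x)"
    by metis
  then show ?thesis
    using x by blast
qed

lemma strongly_diophantine_imp_strong_exp_sep:
  assumes "finite \<A>" "\<forall>A\<in>\<A>. det A = 1" "strongly_diophantine \<A>"
  shows "strong_exp_sep \<A> {0, pi/4, pi/2}"
proof -
  obtain c0 where "c0 > 0" and dioph0: "\<And>n i j. i \<in> words \<A> n \<Longrightarrow> j \<in> words \<A> n \<Longrightarrow> i \<noteq> j \<Longrightarrow>
      c0 ^ n < matrix_norm (matw i - matw j)"
    using assms(3) unfolding strongly_diophantine_def matrix_norm_def by blast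
  define c where "c = min c0 1"
  have c: "0 < c" "c \<le> 1"
    using \<open>c0 > 0\<close> by (auto simp: c_def)
  have dioph: "c ^ n < matrix_norm (matw i - matw j)"
    if "i \<in> words \<A> n" "j \<in> words \<A> n" "i \<noteq> j" for n i j
    using dioph0[OF that] power_mono[of c c0 n] c by (simp add: c_def)
  define K where "K = Max (insert 1 (matrix_norm ` \<A>))"
  have K: "\<forall>A\<in>\<A>. matrix_norm A \<le> K" "1 \<le> K"
    using assms(1) by (auto simp: K_def)
  define \<delta> where "\<delta> = c ^ 4 / K ^ 8"
  have "0 < \<delta>"
    using c K by (simp add: \<delta>_def)
  have bound: "\<exists>x\<in>{0, pi/4, pi/2}. \<delta> ^ n / 1280 \<le> dP (phiw i x) (phiw j x)"
    if "i \<in> words \<A> n" "j \<in> words \<A> n" "i \<noteq> j" for n i j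
    unfolding \<delta>_def by (rule dP_phiw_lower_bound[OF assms(2) K c _ that]) (rule dioph)
  show ?thesis
    unfolding strong_exp_sep_def
  proof (intro conjI allI ballI impI)
    fix n i j
    assume "i \<in> words \<A> n" "j \<in> words \<A> n" "phiw i = phiw j"
    show "i = j"
    proof (rule ccontr)
      assume "i \<noteq> j"
      then obtain x where "\<delta> ^ n / 1280 \<le> dP (phiw i x) (phiw j x)"
        using bound \<open>i \<in> words \<A> n\<close> \<open>j \<in> words \<A> n\<close> by blast
      then show False
        using \<open>phiw i = phiw j\<close> zero_less_power[OF \<open>0 < \<delta>\<close>, of n] by simp
    qed
  next
    show "\<exists>c>0. \<forall>n. \<forall>i\<in>words \<A> n. \<forall>j\<in>words \<A> n. 1 \<le> n \<longrightarrow> hd i \<noteq> hd j \<longrightarrow>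
        c ^ n < (SUP x\<in>{0, pi/4, pi/2}. dP (phiw i x) (phiw j x))"
    proof (intro exI[of _ "\<delta> / 2560"] conjI allI ballI impI)
      show "0 < \<delta> / 2560"
        using \<open>0 < \<delta>\<close> by simp
      fix n i j
      assume "i \<in> words \<A> n" "j \<in> words \<A> n" "1 \<le> n" "hd i \<noteq> hd j"
      then obtain x where "x \<in> {0, pi/4, pi/2}" "\<delta> ^ n / 1280 \<le> dP (phiw i x) (phiw j x)"
        using bound by blast
      moreover have "(\<delta> / 2560) ^ n < \<delta> ^ n / 1280"
      proof -
        have "(2560::real) \<le> 2560 ^ n"
          using \<open>1 \<le> n\<close> power_increasing[of 1 n "2560::real"] by simp
        then show ?thesis
          using \<open>0 < \<delta>\<close> by (simp add: power_divide field_simps)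
      qed
      moreover have "dP (phiw i x) (phiw j x) \<le> (SUP x\<in>{0, pi/4, pi/2}. dP (phiw i x) (phiw j x))"
        using \<open>x \<in> {0, pi/4, pi/2}\<close> by (intro cSUP_upper) auto
      ultimately show "(\<delta> / 2560) ^ n < (SUP x\<in>{0, pi/4, pi/2}. dP (phiw i x) (phiw j x))"
        by linarith
    qed
  qed
qed

theorem lemma3p6:
  shows "(\<forall>\<A> :: (real ^ 2 ^ 2) set. finite \<A> \<longrightarrow> (\<forall>A\<in>\<A>. invertible A) \<longrightarrow>
           (\<forall>J. J \<noteq> {} \<longrightarrow> J \<subseteq> {0..<pi} \<longrightarrow> strong_exp_sep \<A> J \<longrightarrow> strongly_diophantine \<A>)) \<and>
         (\<forall>\<A> :: (real ^ 2 ^ 2) set. finite \<A> \<longrightarrow> (\<forall>A\<in>\<A>. det A = 1) \<longrightarrow>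
           ((\<exists>J. J \<subseteq> {0..<pi} \<and> (\<exists>a b c. a \<in> J \<and> b \<in> J \<and> c \<in> J \<and> a \<noteq> b \<and> a \<noteq> c \<and> b \<noteq> c) \<and> strong_exp_sep \<A> J) \<longleftrightarrow> strongly_diophantine \<A>))"
proof (intro conjI allI impI)
  fix \<A> :: "(real ^ 2 ^ 2) set" and J :: "real set"
  assume "finite \<A>" "\<forall>A\<in>\<A>. invertible A" "J \<noteq> {}" "strong_exp_sep \<A> J"
  then show "strongly_diophantine \<A>"
    by (rule strong_exp_sep_imp_strongly_diophantine)
next
  fix \<A> :: "(real ^ 2 ^ 2) set"
  assume "finite \<A>" "\<forall>A\<in>\<A>. det A = 1"
  moreover have "{0, pi/4, pi/2} \<subseteq> {0..<pi}" "0 \<noteq> pi/4" "0 \<noteq> pi/2" "pi/4 \<noteq> pi/2"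
    using pi_gt_zero by auto
  ultimately show "(\<exists>J. J \<subseteq> {0..<pi} \<and> (\<exists>a b c. a \<in> J \<and> b \<in> J \<and> c \<in> J \<and> a \<noteq> b \<and> a \<noteq> c \<and> b \<noteq> c) \<and> strong_exp_sep \<A> J) \<longleftrightarrow> strongly_diophantine \<A>"
    using strong_exp_sep_imp_strongly_diophantine strongly_diophantine_imp_strong_exp_sep
    by (metis (no_types) empty_iff insertI1 insertI2 invertible_det_nz zero_neq_one)
qed

end
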